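(* Let $q=2^h$ and let $$U=\left\{\left(x,\,y,\,x^q+y^{q^2},\,x^{q^2}+y^q+y^{q^2}\right): x,y\in\mathbb F_{q^4}\right\}\subseteq\mathbb F_{q^4}^4.$$ Then $U$ is maximum scattered if and only if $h\not\equiv 2\pmod 4$.
   Context: $U$ is an $\mathbb F_q$-subspace of $\mathbb F_{q^4}^4$. An $\mathbb F_q$-subspace $U$ of $\mathbb F_{q^m}^k$ is scattered if $\dim_{\mathbb F_q}(U\cap\langle w\rangle_{\mathbb F_{q^m}})\le 1$ for every nonzero $w\in\mathbb F_{q^m}^k$; a scattered subspace has $\mathbb F_q$-dimension at most $km/2$, and it is called maximum scattered if its $\mathbb F_q$-dimension equals $km/2$ (here $km/2=8$). *)

theory Defs
  imports "HOL-Analysis.Analysis"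
begin

text \<open>Vectors of F^n are elements of type 'a^'n.  F is a finite field of order q^m;
  its subfield F_q is the set of fixed points of the Frobenius x \<mapsto> x^q.\<close>

definition Fq :: "nat \<Rightarrow> ('a::field) set" where
  "Fq q = {a. a ^ q = a}"

definition smultv :: "'a::field \<Rightarrow> 'a ^ 'n \<Rightarrow> 'a ^ 'n" where
  "smultv c v = (\<chi> i. c * v $ i)"

definition Fq_subspace :: "nat \<Rightarrow> ('a::field ^ 'n) set \<Rightarrow> bool" where
  "Fq_subspace q U \<longleftrightarrow> 0 \<in> U \<and> (\<forall>u\<in>U. \<forall>v\<in>U. u + v \<in> U)
     \<and> (\<forall>c\<in>Fq q. \<forall>u\<in>U. smultv c u \<in> U)"

definition Fq_indep :: "nat \<Rightarrow> ('a::field ^ 'n) set \<Rightarrow> bool" where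
  "Fq_indep q S \<longleftrightarrow> finite S \<and>
     (\<forall>c. (\<forall>s\<in>S. c s \<in> Fq q) \<longrightarrow> (\<Sum>s\<in>S. smultv (c s) s) = 0 \<longrightarrow> (\<forall>s\<in>S. c s = 0))"

definition Fq_dim :: "nat \<Rightarrow> ('a::{field,finite} ^ 'n) set \<Rightarrow> nat" where
  "Fq_dim q W = Max (card ` {S. S \<subseteq> W \<and> Fq_indep q S})"

definition Fspan1 :: "'a::field ^ 'n \<Rightarrow> ('a ^ 'n) set" where
  "Fspan1 w = {smultv c w | c. True}"

definition scattered :: "nat \<Rightarrow> ('a::{field,finite} ^ 'n) set \<Rightarrow> bool" where
  "scattered q U \<longleftrightarrow> Fq_subspace q U \<and>
     (\<forall>w. w \<noteq> 0 \<longrightarrow> Fq_dim q (U \<inter> Fspan1 w) \<le> 1)"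

definition maximum_scattered :: "nat \<Rightarrow> nat \<Rightarrow> ('a::{field,finite} ^ 'n) set \<Rightarrow> bool" where
  "maximum_scattered q m U \<longleftrightarrow> scattered q U \<and> 2 * Fq_dim q U = CARD('n) * m"

end

theory Submission
  imports Defs "HOL-Computational_Algebra.Polynomial"
begin

text \<open>Write \<open>F\<close> for the Frobenius \<open>x \<mapsto> x ^ q\<close> of \<open>GF(q ^ 4)\<close> and \<open>P(x, y)\<close> for the
  generic point of \<open>U\<close>. As \<open>U\<close> is a \<open>GF(q)\<close>-subspace with \<open>q ^ 8\<close> elements, it is maximum
  scattered iff \<open>\<lambda> P(x, y) \<in> U\<close> with \<open>(x, y) \<noteq> 0\<close> forces \<open>\<lambda> \<in> GF(q)\<close>. With
  \<open>a = F \<lambda> + \<lambda>\<close> and \<open>b = F (F \<lambda>) + \<lambda>\<close> this membership is linear in \<open>F x, F y, F (F x), F (F y)\<close>.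
  If \<open>\<lambda> \<notin> GF(q)\<close>, the quotient \<open>w = F x / F y\<close> satisfies \<open>w F w + w + 1 = 0\<close>, which forces
  \<open>F w = w\<close> and \<open>w\<^sup>2 + w + 1 = 0\<close>; moreover \<open>F (F y) = (a w / b) F y\<close>, so \<open>a w / b\<close> has norm
  \<open>1\<close>, and this says that \<open>c = a F (F a) / (b F b)\<close>, which satisfies \<open>F c = c + 1\<close>, also
  satisfies \<open>c\<^sup>2 + c = w\<^sup>2\<close>, whence \<open>c ^ 4 = c + 1\<close>. On \<open>GF(16)\<close> the map
  \<open>x \<mapsto> x ^ (2 ^ h)\<close> depends only on \<open>h mod 4\<close>, so \<open>w\<close> rules out odd \<open>h\<close> and \<open>c\<close>
  rules out \<open>4 dvd h\<close>. If \<open>h mod 4 = 2\<close>, a root \<open>a\<close> of \<open>x ^ 4 + x + 1\<close> has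
  \<open>F a = a + 1\<close>, hence trace \<open>0\<close>, so by Artin--Schreier \<open>a = F \<lambda> + \<lambda>\<close> for some
  \<open>\<lambda>\<close>, and this \<open>\<lambda> \<notin> GF(q)\<close> maps the point \<open>P(a\<^sup>2 / (a + 1), a\<^sup>2 + 1)\<close> into \<open>U\<close>.\<close>

section \<open>Finite fields of characteristic two\<close>

lemma of_nat_CARD_eq_0: "of_nat CARD('a::{field,finite}) = (0::'a)"
proof -
  have "(\<Sum>y\<in>UNIV. y) = (\<Sum>y\<in>UNIV. y + (1::'a))"
    by (rule sum.reindex_bij_witness[of _ "\<lambda>y. y + 1" "\<lambda>y. y - 1"]) auto
  then show ?thesis by (simp add: sum.distrib)
qed

lemma two_eq_0_if_CARD_power_2:
  assumes "CARD('a::{field,finite}) = 2 ^ n"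
  shows "(2::'a) = 0"
proof -
  have "(2::'a) ^ n = 0"
    using of_nat_CARD_eq_0[where 'a='a] assms by simp
  then show ?thesis by simp
qed

lemma two_le_CARD_field: "2 \<le> CARD('a::{field,finite})"
proof -
  have "card {0::'a, 1} \<le> CARD('a)"
    by (rule card_mono) auto
  then show ?thesis
    by simp
qed

lemma power_CARD_eq_self: "(x::'a::{field,finite}) ^ CARD('a) = x"
proof (cases "x = 0")
  case False
  let ?A = "UNIV - {0::'a}"
  have "(\<Prod>y\<in>?A. y) = (\<Prod>y\<in>?A. x * y)"
    by (rule sym, rule prod.reindex_bij_witness[of _ "\<lambda>y. y / x" "\<lambda>y. x * y"])
      (use False in auto)
  also have "\<dots> = x ^ (CARD('a) - 1) * (\<Prod>y\<in>?A. y)"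
    by (simp add: prod.distrib card_Diff_subset)
  finally have "x ^ (CARD('a) - 1) = 1"
    by simp
  moreover have "CARD('a) = Suc (CARD('a) - 1)"
    using finite_UNIV_card_ge_0[where 'a='a] by simp
  ultimately show ?thesis
    by (metis power_Suc mult_1_right)
qed simp

lemma add_self_char2: "(2::'a::ring_1) = 0 \<Longrightarrow> a + a = (0::'a)"
  by (metis mult_2 mult_zero_left)

lemma minus_char2: "(2::'a::ring_1) = 0 \<Longrightarrow> - a = (a::'a)"
  by (simp add: add_self_char2 minus_unique)

lemma diff_char2: "(2::'a::ring_1) = 0 \<Longrightarrow> a - b = a + (b::'a)"
  by (simp add: minus_char2)

lemma add_eq_0_iff_char2: "(2::'a::ring_1) = 0 \<Longrightarrow> a + b = 0 \<longleftrightarrow> a = (b::'a)"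
  by (metis add_eq_0_iff2 minus_char2)

lemma add_eq_iff_char2: "(2::'a::ring_1) = 0 \<Longrightarrow> a + b = c \<longleftrightarrow> a = c + (b::'a)"
  by (simp add: eq_diff_eq[symmetric] diff_char2)

lemma power_2_power_add_char2:
  assumes "(2::'a::comm_ring_1) = 0"
  shows "(a + b) ^ (2 ^ k) = a ^ (2 ^ k) + (b::'a) ^ (2 ^ k)"
proof (induction k)
  case (Suc k)
  have "(a + b) ^ (2 ^ Suc k) = ((a + b) ^ (2 ^ k)) ^ 2"
    by (simp add: power_mult[symmetric] mult.commute)
  also have "\<dots> = a ^ (2 ^ Suc k) + b ^ (2 ^ Suc k)"
    by (simp add: Suc power2_sum assms power_mult[symmetric] mult.commute)
  finally show ?case .
qed simp

section \<open>The Artin--Schreier map\<close>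

lemma card_roots_sparse_poly_le:
  fixes c :: "nat \<Rightarrow> 'a::field" and e :: "nat \<Rightarrow> nat"
  assumes "finite I" "j \<in> I" "c j \<noteq> 0" "\<forall>i\<in>I. i \<noteq> j \<longrightarrow> e i \<noteq> e j" "\<forall>i\<in>I. e i \<le> d"
  shows "card {x. (\<Sum>i\<in>I. c i * x ^ e i) = 0} \<le> d"
proof -
  define p where "p = (\<Sum>i\<in>I. monom (c i) (e i))"
  have coeff_p: "coeff p k = (\<Sum>i\<in>I. if e i = k then c i else 0)" for k
    unfolding p_def coeff_sum by simp
  have "coeff p (e j) = (\<Sum>i\<in>{j}. if e i = e j then c i else 0)"
    unfolding coeff_p using assms by (intro sum.mono_neutral_right) auto
  then have "p \<noteq> 0"
    using assms(3) by auto
  moreover have "degree p \<le> d"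
    using assms(5) by (intro degree_le) (auto simp: coeff_p intro!: sum.neutral)
  ultimately have "card {x. poly p x = 0} \<le> d"
    using card_poly_roots_bound[of p] by linarith
  moreover have "poly p x = (\<Sum>i\<in>I. c i * x ^ e i)" for x
    unfolding p_def poly_sum by (simp add: poly_monom)
  ultimately show ?thesis
    by simp
qed

lemma card_kernel_mult_card_range:
  fixes f :: "'a::{ab_group_add,finite} \<Rightarrow> 'b::ab_group_add"
  assumes additive: "\<And>x y. f (x + y) = f x + f y"
  shows "CARD('a) = card {x. f x = 0} * card (range f)"
proof -
  have f_diff: "f (x - y) = f x - f y" for x y
    using additive[of y "x - y"] by (simp add: algebra_simps)
  have fibre: "f -` {f x0} = (\<lambda>k. x0 + k) ` {x. f x = 0}" for x0
  proof (intro equalityI subsetI)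
    fix x assume "x \<in> f -` {f x0}"
    then have "f (x - x0) = 0" and "x = x0 + (x - x0)"
      by (simp_all add: f_diff)
    then show "x \<in> (\<lambda>k. x0 + k) ` {x. f x = 0}"
      by blast
  qed (auto simp: additive)
  have "(UNIV::'a set) = (\<Union>y\<in>range f. f -` {y})"
    by auto
  then have "CARD('a) = card (\<Union>y\<in>range f. f -` {y})"
    by simp
  also have "\<dots> = (\<Sum>y\<in>range f. card (f -` {y}))"
    by (rule card_UN_disjoint) auto
  also have "\<dots> = (\<Sum>y\<in>range f. card {x. f x = 0})"
    by (intro sum.cong) (auto simp: fibre card_image)
  finally show ?thesis
    by simp
qed

lemma card_power_fixed_le:
  assumes "2 \<le> p"
  shows "card {x::'a::field. x ^ p = x} \<le> p"
proof -
  have "card {x::'a. (\<Sum>i\<in>{0::nat, 1}. (if i = 0 then 1 else -1) * x ^ (if i = 0 then p else 1)) = 0}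
      \<le> p"
    using assms by (intro card_roots_sparse_poly_le[where j = 0]) auto
  then show ?thesis
    by simp
qed

lemma card_trace_roots_le:
  assumes "2 \<le> p" and "1 \<le> n"
  shows "card {y::'a::field. (\<Sum>i<n. y ^ (p ^ i)) = 0} \<le> p ^ (n - 1)"
proof -
  have "card {y::'a. (\<Sum>i<n. 1 * y ^ (p ^ i)) = 0} \<le> p ^ (n - 1)"
    using assms by (intro card_roots_sparse_poly_le[where j = "n - 1"]) (auto intro: power_increasing)
  then show ?thesis
    by simp
qed

lemma trace_power_add_self:
  assumes card: "CARD('a::{field,finite}) = p ^ n" and p: "p = 2 ^ e"
  shows "(\<Sum>i<n. (x ^ p + x) ^ (p ^ i)) = (0::'a)"
proof -
  have char2: "(2::'a) = 0"
    using card p two_eq_0_if_CARD_power_2[of "e * n"] by (simp add: power_mult)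
  have "(x ^ p + x) ^ (p ^ i) = x ^ (p ^ Suc i) - x ^ (p ^ i)" for i
    using power_2_power_add_char2[OF char2, of "x ^ p" x "e * i"] p
    by (simp add: diff_char2[OF char2] power_mult[symmetric] mult.commute)
  then have "(\<Sum>i<n. (x ^ p + x) ^ (p ^ i)) = x ^ CARD('a) - x"
    using sum_lessThan_telescope[of "\<lambda>i. x ^ (p ^ i)" n] by (simp add: card)
  then show ?thesis
    by (simp add: power_CARD_eq_self)
qed

lemma artin_schreier:
  assumes card: "CARD('a::{field,finite}) = p ^ n" and p: "p = 2 ^ e" and "e \<ge> 1"
  shows "card {x::'a. x ^ p = x} = p"
    and "range (\<lambda>x::'a. x ^ p + x) = {y. (\<Sum>i<n. y ^ (p ^ i)) = 0}"
proof -
  have char2: "(2::'a) = 0"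
    using card p two_eq_0_if_CARD_power_2[of "e * n"] by (simp add: power_mult)
  have "p \<ge> 2"
    using p \<open>e \<ge> 1\<close> by (metis one_le_numeral power_increasing power_one_right)
  have "n \<ge> 1"
    using two_le_CARD_field[where 'a='a] card by (cases n) auto
  define L where "L x = x ^ p + x" for x :: 'a
  define Z where "Z = {y::'a. (\<Sum>i<n. y ^ (p ^ i)) = 0}"
  have kernel_L: "{x. L x = 0} = {x. x ^ p = x}"
    by (simp add: L_def add_eq_0_iff_char2[OF char2])
  have range_L: "range L \<subseteq> Z"
    using trace_power_add_self[OF card p] by (auto simp: L_def Z_def)
  have card_Z: "card Z \<le> p ^ (n - 1)"
    unfolding Z_def using \<open>p \<ge> 2\<close> \<open>n \<ge> 1\<close> by (rule card_trace_roots_le)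
  have "L (x + y) = L x + L y" for x y
    using power_2_power_add_char2[OF char2, of x y e] p by (simp add: L_def algebra_simps)
  then have count: "card {x. L x = 0} * card (range L) = p * p ^ (n - 1)"
    using card_kernel_mult_card_range[of L] card \<open>n \<ge> 1\<close> by (simp add: power_eq_if)
  have "card (range L) \<le> p ^ (n - 1)"
    using card_mono[OF finite range_L] card_Z by simp
  moreover have "card {x. L x = 0} \<le> p"
    using card_power_fixed_le[OF \<open>p \<ge> 2\<close>] kernel_L by simp
  ultimately have "card {x. L x = 0} = p"
    using count mult_le_mono2[of "card (range L)" "p ^ (n - 1)" "card {x. L x = 0}"] \<open>p \<ge> 2\<close>
    by simp
  moreover from this have "card (range L) = p ^ (n - 1)"
    using count \<open>p \<ge> 2\<close> by simp
  ultimately show "card {x::'a. x ^ p = x} = p"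
    and "range (\<lambda>x::'a. x ^ p + x) = {y. (\<Sum>i<n. y ^ (p ^ i)) = 0}"
    using kernel_L card_seteq[OF finite range_L] card_Z by (auto simp: L_def[abs_def] Z_def)
qed

section \<open>Linear algebra over the fixed field of the Frobenius\<close>

definition is_subfield :: "'a::field set \<Rightarrow> bool" where
  "is_subfield K \<longleftrightarrow> 0 \<in> K \<and> 1 \<in> K \<and> (\<forall>a\<in>K. \<forall>b\<in>K. a - b \<in> K \<and> a * b \<in> K \<and> a / b \<in> K)"

lemma is_subfieldD:
  assumes "is_subfield K"
  shows "0 \<in> K" and "1 \<in> K" and "a \<in> K \<Longrightarrow> b \<in> K \<Longrightarrow> a - b \<in> K"
    and "a \<in> K \<Longrightarrow> b \<in> K \<Longrightarrow> a * b \<in> K" and "a \<in> K \<Longrightarrow> b \<in> K \<Longrightarrow> a / b \<in> K"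
    and "a \<in> K \<Longrightarrow> - a \<in> K"
  using assms by (auto simp: is_subfield_def)

lemma is_subfield_Fq:
  assumes power_add: "\<And>a b::'a::field. (a + b) ^ q = a ^ q + b ^ q" and "q > 0"
  shows "is_subfield (Fq q :: 'a set)"
proof -
  have "(a - b) ^ q = a ^ q - b ^ q" for a b :: 'a
    using power_add[of "a - b" b] by (simp add: eq_diff_eq)
  then show ?thesis
    using \<open>q > 0\<close> by (auto simp: is_subfield_def Fq_def power_mult_distrib power_divide)
qed

lemma smultv_nth [simp]: "smultv c v $ i = c * v $ i"
  by (simp add: smultv_def)

lemma smultv_eq_0_iff: "smultv c v = 0 \<longleftrightarrow> c = 0 \<or> v = 0"
  by (auto simp: vec_eq_iff)

lemma smultv_eq_self_iff: "smultv c v = v \<longleftrightarrow> c = 1 \<or> v = 0"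
  by (auto simp: vec_eq_iff)

lemma smultv_0 [simp]: "smultv 0 v = 0"
  by (simp add: smultv_eq_0_iff)

lemma smultv_1 [simp]: "smultv 1 v = v"
  by (simp add: vec_eq_iff)

definition lincomb :: "('a::field ^ 'n \<Rightarrow> 'a) \<Rightarrow> ('a ^ 'n) set \<Rightarrow> 'a ^ 'n" where
  "lincomb c S = (\<Sum>s\<in>S. smultv (c s) s)"

definition Fq_span :: "nat \<Rightarrow> ('a::field ^ 'n) set \<Rightarrow> ('a ^ 'n) set" where
  "Fq_span q S = (\<lambda>c. lincomb c S) ` (S \<rightarrow>\<^sub>E Fq q)"

lemma Fq_indep_iff_lincomb:
  "Fq_indep q S \<longleftrightarrow> finite S \<and>
     (\<forall>c. (\<forall>s\<in>S. c s \<in> Fq q) \<longrightarrow> lincomb c S = 0 \<longrightarrow> (\<forall>s\<in>S. c s = 0))"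
  by (simp add: Fq_indep_def lincomb_def)

lemma Fq_indepD:
  "Fq_indep q S \<Longrightarrow> \<forall>s\<in>S. c s \<in> Fq q \<Longrightarrow> lincomb c S = 0 \<Longrightarrow> \<forall>s\<in>S. c s = 0"
  by (simp add: Fq_indep_iff_lincomb)

lemma lincomb_nth: "lincomb c S $ i = (\<Sum>s\<in>S. c s * s $ i)"
  by (simp add: lincomb_def)

lemma lincomb_diff: "lincomb (\<lambda>s. c s - d s) S = lincomb c S - lincomb d S"
  by (simp add: vec_eq_iff lincomb_nth sum_subtractf left_diff_distrib)

lemma lincomb_supported:
  assumes "finite S" "T \<subseteq> S" "\<forall>s\<in>S - T. c s = 0"
  shows "lincomb c S = lincomb c T"
  unfolding lincomb_def using assms by (intro sum.mono_neutral_right) auto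

lemma lincomb_scale: "lincomb (\<lambda>s. a * c s) S = smultv a (lincomb c S)"
  by (simp add: vec_eq_iff lincomb_nth sum_distrib_left mult.assoc)

lemma lincomb_insert:
  "finite S \<Longrightarrow> w \<notin> S \<Longrightarrow> lincomb c (insert w S) = smultv (c w) w + lincomb c S"
  by (simp add: lincomb_def)

lemma lincomb_in_Fq_span:
  assumes "finite S" "\<forall>s\<in>S. c s \<in> Fq q"
  shows "lincomb c S \<in> Fq_span q S"
proof -
  have "lincomb c S = lincomb (restrict c S) S"
    unfolding lincomb_def by (intro sum.cong) auto
  then show ?thesis
    using assms(2) unfolding Fq_span_def by (intro image_eqI) auto
qed

lemma lincomb_in_subspace:
  assumes W: "Fq_subspace q W" and "finite S" "S \<subseteq> W" "\<forall>s\<in>S. c s \<in> Fq q"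
  shows "lincomb c S \<in> W"
  using assms(2-4)
proof (induction S rule: finite_induct)
  case (insert x S)
  then show ?case
    using W by (simp add: lincomb_def Fq_subspace_def)
qed (use W in \<open>simp add: lincomb_def Fq_subspace_def\<close>)

lemma Fq_span_subset:
  "Fq_subspace q W \<Longrightarrow> finite S \<Longrightarrow> S \<subseteq> W \<Longrightarrow> Fq_span q S \<subseteq> W"
  by (auto simp: Fq_span_def PiE_iff intro: lincomb_in_subspace)

lemma card_Fq_span_le:
  fixes S :: "('a::{field,finite} ^ 'n) set"
  assumes "finite S"
  shows "card (Fq_span q S) \<le> card (Fq q :: 'a set) ^ card S"
proof -
  have "card (Fq_span q S) \<le> card (S \<rightarrow>\<^sub>E (Fq q :: 'a set))"
    unfolding Fq_span_def by (rule card_image_le) simp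
  then show ?thesis
    using assms by (simp add: card_PiE)
qed

lemma card_Fq_span:
  assumes K: "is_subfield (Fq q :: 'a::field set)" and S: "Fq_indep q (S :: ('a ^ 'n) set)"
  shows "card (Fq_span q S) = card (Fq q :: 'a set) ^ card S"
proof -
  have "inj_on (\<lambda>c. lincomb c S) (S \<rightarrow>\<^sub>E Fq q)"
  proof (rule inj_onI)
    fix c d assume c: "c \<in> S \<rightarrow>\<^sub>E Fq q" and d: "d \<in> S \<rightarrow>\<^sub>E Fq q"
      and eq: "lincomb c S = lincomb d S"
    have "\<forall>s\<in>S. c s - d s \<in> Fq q"
      using c d is_subfieldD(3)[OF K] by auto
    moreover have "lincomb (\<lambda>s. c s - d s) S = 0"
      using eq by (simp add: lincomb_diff)
    ultimately have "\<forall>s\<in>S. c s - d s = 0"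
      by (rule Fq_indepD[OF S])
    then show "c = d"
      using c d by (intro PiE_ext) auto
  qed
  then show ?thesis
    using S by (simp add: Fq_span_def Fq_indep_def card_image card_PiE)
qed

lemma Fq_indep_nonzero:
  fixes S :: "('a::field ^ 'n) set"
  assumes K: "is_subfield (Fq q :: 'a set)" and "Fq_indep q S" "u \<in> S"
  shows "u \<noteq> 0"
proof
  assume "u = 0"
  let ?c = "\<lambda>s. if s = u then 1 else 0 :: 'a"
  have "lincomb ?c S = lincomb ?c {u}"
    using assms by (intro lincomb_supported) (auto simp: Fq_indep_def)
  with \<open>u = 0\<close> have "lincomb ?c S = 0"
    by (simp add: lincomb_def)
  moreover have "\<forall>s\<in>S. ?c s \<in> Fq q"
    using is_subfieldD[OF K] by simp
  ultimately show False
    using Fq_indepD[OF assms(2)] assms(3) by fastforce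
qed

lemma Fq_indep_not_multiple:
  fixes S :: "('a::field ^ 'n) set"
  assumes K: "is_subfield (Fq q :: 'a set)" and S: "Fq_indep q S"
    and "u \<in> S" "v \<in> S" "u \<noteq> v" and l: "l \<in> Fq q"
  shows "v \<noteq> smultv l u"
proof
  assume v: "v = smultv l u"
  let ?c = "\<lambda>s. if s = u then l else if s = v then -1 else 0"
  have "\<forall>s\<in>S. ?c s \<in> Fq q"
    using is_subfieldD[OF K] l by simp
  moreover have "lincomb ?c S = lincomb ?c {u, v}"
    using assms S by (intro lincomb_supported) (auto simp: Fq_indep_def)
  then have "lincomb ?c S = 0"
    using \<open>u \<noteq> v\<close> by (simp add: lincomb_def v vec_eq_iff)
  ultimately show False
    using Fq_indepD[OF S] \<open>v \<in> S\<close> \<open>u \<noteq> v\<close> by fastforce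
qed

lemma Fq_indep_pair:
  fixes u :: "'a::field ^ 'n"
  assumes K: "is_subfield (Fq q :: 'a set)" and "u \<noteq> 0" and l: "l \<notin> Fq q"
  shows "Fq_indep q {u, smultv l u}"
proof -
  obtain i where i: "u $ i \<noteq> 0"
    using \<open>u \<noteq> 0\<close> by (metis vec_eq_iff zero_index)
  have "u \<noteq> smultv l u"
    using l is_subfieldD(2)[OF K] \<open>u \<noteq> 0\<close> smultv_eq_self_iff[of l u] by auto
  have "c u = 0 \<and> c (smultv l u) = 0"
    if c: "\<forall>s\<in>{u, smultv l u}. c s \<in> Fq q" and "lincomb c {u, smultv l u} = 0" for c
  proof -
    let ?a = "c u" and ?b = "c (smultv l u)"
    have "(?a + ?b * l) * u $ i = 0"
      using \<open>lincomb c {u, smultv l u} = 0\<close> \<open>u \<noteq> smultv l u\<close>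
      by (simp add: lincomb_def vec_eq_iff algebra_simps)
    then have lin: "?a + ?b * l = 0"
      using i by simp
    have "?b = 0"
    proof (rule ccontr)
      assume "?b \<noteq> 0"
      then have "l = - (?a / ?b)"
        using lin by (simp add: field_simps eq_neg_iff_add_eq_0)
      moreover have "- (?a / ?b) \<in> Fq q"
        using c is_subfieldD[OF K] by simp
      ultimately show False
        using l by simp
    qed
    with lin show ?thesis
      by simp
  qed
  then show ?thesis
    by (auto simp: Fq_indep_iff_lincomb)
qed

lemma Fq_indep_insert:
  fixes S :: "('a::field ^ 'n) set"
  assumes K: "is_subfield (Fq q :: 'a set)" and S: "Fq_indep q S" and w: "w \<notin> Fq_span q S"
  shows "w \<notin> S" and "Fq_indep q (insert w S)"
proof -
  have "finite S"
    using S by (simp add: Fq_indep_def)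
  show "w \<notin> S"
  proof
    assume "w \<in> S"
    let ?c = "\<lambda>s. if s = w then 1 else 0"
    have "lincomb ?c S = lincomb ?c {w}"
      using \<open>finite S\<close> \<open>w \<in> S\<close> by (intro lincomb_supported) auto
    then have "lincomb ?c S = w"
      by (simp add: lincomb_def)
    moreover have "lincomb ?c S \<in> Fq_span q S"
      using is_subfieldD[OF K] \<open>finite S\<close> by (intro lincomb_in_Fq_span) auto
    ultimately show False
      using w by simp
  qed
  have "\<forall>s\<in>insert w S. c s = 0"
    if c: "\<forall>s\<in>insert w S. c s \<in> Fq q" and c0: "lincomb c (insert w S) = 0" for c
  proof -
    have sum0: "smultv (c w) w + lincomb c S = 0"
      using c0 \<open>finite S\<close> \<open>w \<notin> S\<close> by (simp add: lincomb_insert)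
    have "c w = 0"
    proof (rule ccontr)
      assume "c w \<noteq> 0"
      have "lincomb (\<lambda>s. - (1 / c w) * c s) S = w"
        using sum0 \<open>c w \<noteq> 0\<close> unfolding lincomb_scale
        by (simp add: vec_eq_iff eq_neg_iff_add_eq_0[symmetric] field_simps)
      moreover have "lincomb (\<lambda>s. - (1 / c w) * c s) S \<in> Fq_span q S"
        using is_subfieldD[OF K] c \<open>finite S\<close> by (intro lincomb_in_Fq_span) auto
      ultimately show False
        using w by simp
    qed
    moreover have "\<forall>s\<in>S. c s = 0"
      using sum0 c \<open>c w = 0\<close> by (intro Fq_indepD[OF S]) auto
    ultimately show ?thesis
      by simp
  qed
  then show "Fq_indep q (insert w S)"
    using \<open>finite S\<close> by (simp add: Fq_indep_iff_lincomb)
qed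

lemma Fq_dim_le_iff:
  fixes W :: "('a::{field,finite} ^ 'n) set"
  shows "Fq_dim q W \<le> d \<longleftrightarrow> (\<forall>S\<subseteq>W. Fq_indep q S \<longrightarrow> card S \<le> d)"
proof -
  have "Fq_indep q {}"
    by (simp add: Fq_indep_def)
  then have "card ` {S. S \<subseteq> W \<and> Fq_indep q S} \<noteq> {}"
    by blast
  then show ?thesis
    unfolding Fq_dim_def by (subst Max_le_iff) auto
qed

lemma Fq_dim_ge:
  fixes W :: "('a::{field,finite} ^ 'n) set"
  shows "S \<subseteq> W \<Longrightarrow> Fq_indep q S \<Longrightarrow> card S \<le> Fq_dim q W"
  unfolding Fq_dim_def by (intro Max_ge) auto

lemma Fq_dim_eq:
  fixes W :: "('a::{field,finite} ^ 'n) set"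
  assumes K: "is_subfield (Fq q :: 'a set)" and card_Fq: "card (Fq q :: 'a set) = q"
    and W: "Fq_subspace q W" and card_W: "card W = q ^ N"
  shows "Fq_dim q W = N"
proof (rule antisym)
  have "q \<ge> 2"
    using card_mono[of "Fq q" "{0, 1::'a}"] is_subfieldD(1,2)[OF K] card_Fq by simp
  show "Fq_dim q W \<le> N"
    unfolding Fq_dim_le_iff
  proof (intro allI impI)
    fix S assume "S \<subseteq> W" and S: "Fq_indep q S"
    then have "Fq_span q S \<subseteq> W"
      by (intro Fq_span_subset[OF W]) (auto simp: Fq_indep_def)
    then have "card (Fq_span q S) \<le> card W"
      by (rule card_mono[OF finite])
    then have "q ^ card S \<le> q ^ N"
      using card_Fq_span[OF K S] card_Fq card_W by simp
    then show "card S \<le> N"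
      using \<open>q \<ge> 2\<close> by simp
  qed
  have "\<exists>S\<subseteq>W. Fq_indep q S \<and> card S = k" if "k \<le> N" for k
    using that
  proof (induction k)
    case 0
    have "Fq_indep q {}"
      by (simp add: Fq_indep_def)
    then show ?case
      by auto
  next
    case (Suc k)
    then obtain S where S: "S \<subseteq> W" "Fq_indep q S" "card S = k"
      by auto
    then have "finite S"
      by (simp add: Fq_indep_def)
    have "card (Fq_span q S) \<le> q ^ k"
      using card_Fq_span_le[OF \<open>finite S\<close>, of q] card_Fq S(3) by simp
    also have "\<dots> < card W"
      using card_W \<open>q \<ge> 2\<close> Suc.prems by simp
    finally obtain w where "w \<in> W" "w \<notin> Fq_span q S"
      using card_mono[of "Fq_span q S" W] by fastforce
    then show ?case
      using Fq_indep_insert[OF K S(2)] S \<open>finite S\<close> by (intro exI[of _ "insert w S"]) auto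
  qed
  then show "N \<le> Fq_dim q W"
    using Fq_dim_ge by blast
qed

lemma scattered_iff:
  fixes U :: "('a::{field,finite} ^ 'n) set"
  assumes K: "is_subfield (Fq q :: 'a set)" and U: "Fq_subspace q U"
  shows "scattered q U \<longleftrightarrow> (\<forall>u\<in>U. \<forall>l. u \<noteq> 0 \<longrightarrow> smultv l u \<in> U \<longrightarrow> l \<in> Fq q)"
proof
  assume scattered: "scattered q U"
  show "\<forall>u\<in>U. \<forall>l. u \<noteq> 0 \<longrightarrow> smultv l u \<in> U \<longrightarrow> l \<in> Fq q"
  proof (intro ballI allI impI, rule ccontr)
    fix u l assume "u \<in> U" "u \<noteq> 0" "smultv l u \<in> U" "l \<notin> Fq q"
    have "u \<in> Fspan1 u" and "smultv l u \<in> Fspan1 u"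
      unfolding Fspan1_def by (force intro: exI[of _ 1]) blast
    then have "card {u, smultv l u} \<le> Fq_dim q (U \<inter> Fspan1 u)"
      using \<open>u \<in> U\<close> \<open>smultv l u \<in> U\<close> Fq_indep_pair[OF K \<open>u \<noteq> 0\<close> \<open>l \<notin> Fq q\<close>]
      by (intro Fq_dim_ge) auto
    moreover have "smultv l u \<noteq> u"
      using \<open>l \<notin> Fq q\<close> is_subfieldD(2)[OF K] \<open>u \<noteq> 0\<close> by (auto simp: smultv_eq_self_iff)
    moreover have "Fq_dim q (U \<inter> Fspan1 u) \<le> 1"
      using scattered \<open>u \<noteq> 0\<close> unfolding scattered_def by blast
    ultimately show False
      by simp
  qed
next
  assume stab: "\<forall>u\<in>U. \<forall>l. u \<noteq> 0 \<longrightarrow> smultv l u \<in> U \<longrightarrow> l \<in> Fq q"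
  have "card S \<le> 1" if S: "S \<subseteq> U \<inter> Fspan1 w" "Fq_indep q S" for w S
  proof (rule ccontr)
    assume "\<not> card S \<le> 1"
    moreover have "finite S"
      using \<open>Fq_indep q S\<close> by (simp add: Fq_indep_def)
    ultimately obtain u v where "u \<in> S" "v \<in> S" "u \<noteq> v"
      using card_le_Suc0_iff_eq[of S] by auto
    obtain a b where a: "u = smultv a w" and b: "v = smultv b w"
      using S(1) \<open>u \<in> S\<close> \<open>v \<in> S\<close> unfolding Fspan1_def by blast
    have "u \<noteq> 0"
      using Fq_indep_nonzero[OF K \<open>Fq_indep q S\<close> \<open>u \<in> S\<close>] .
    then have "a \<noteq> 0"
      using a by auto
    then have v: "v = smultv (b / a) u"
      by (simp add: a b vec_eq_iff)
    then have "b / a \<in> Fq q"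
      using stab \<open>u \<noteq> 0\<close> S \<open>u \<in> S\<close> \<open>v \<in> S\<close> by auto
    then show False
      using Fq_indep_not_multiple[OF K \<open>Fq_indep q S\<close> \<open>u \<in> S\<close> \<open>v \<in> S\<close> \<open>u \<noteq> v\<close>] v by blast
  qed
  then show "scattered q U"
    using U by (auto simp: scattered_def Fq_dim_le_iff)
qed

lemma vector_4 [simp]:
  "(vector [a, b, c, d] :: ('a::zero) ^ 4) $ 1 = a"
  "(vector [a, b, c, d] :: ('a::zero) ^ 4) $ 2 = b"
  "(vector [a, b, c, d] :: ('a::zero) ^ 4) $ 3 = c"
  "(vector [a, b, c, d] :: ('a::zero) ^ 4) $ 4 = d"
  unfolding vector_def by simp_all

lemma vec4_eq_iff: "(v :: 'a ^ 4) = w \<longleftrightarrow> v $ 1 = w $ 1 \<and> v $ 2 = w $ 2 \<and> v $ 3 = w $ 3 \<and> v $ 4 = w $ 4"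
  by (simp add: vec_eq_iff forall_4)

section \<open>Roots of \<open>x ^ 2 + x + 1\<close> and \<open>x ^ 4 + x + 1\<close> in characteristic two\<close>

lemma power_power_eq_self: "(x::'a::monoid_mult) ^ k = x \<Longrightarrow> x ^ (k ^ n) = x"
  by (induction n) (simp_all add: power_mult)

lemma cube_root_unity_char2:
  fixes w :: "'a::field"
  assumes char2: "(2::'a) = 0" and w: "w * w + w + 1 = 0"
  shows "w * w = w + 1" and "w * w * w = 1"
proof -
  show ww: "w * w = w + 1"
    using w add_eq_0_iff_char2[OF char2, of "w * w" "w + 1"] by (simp add: add.assoc)
  then show "w * w * w = 1"
    by (simp add: algebra_simps char2)
qed

lemma power_2_power_odd_cube_root:
  fixes w :: "'a::field"
  assumes char2: "(2::'a) = 0" and w: "w * w + w + 1 = 0" and "odd h"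
  shows "w ^ (2 ^ h) \<noteq> w"
proof
  assume fixed: "w ^ (2 ^ h) = w"
  note ww = cube_root_unity_char2[OF char2 w]
  then have "w ^ 4 = w"
    by (simp add: power4_eq_xxxx)
  obtain k where "h = 2 * k + 1"
    using \<open>odd h\<close> oddE by blast
  then have "(2::nat) ^ h = 4 ^ k * 2"
    by (simp add: power_add power_mult)
  then have "w ^ (2 ^ h) = (w ^ (4 ^ k)) ^ 2"
    by (simp add: power_mult)
  also have "\<dots> = w + 1"
    using power_power_eq_self[OF \<open>w ^ 4 = w\<close>] ww(1) by (simp add: power2_eq_square)
  finally show False
    using fixed by simp
qed

lemma power_4_eq_if_cube_root_relation:
  fixes w c :: "'a::field"
  assumes char2: "(2::'a) = 0" and w: "w * w + w + 1 = 0" and c: "c * c + c = w * w"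
  shows "c ^ 4 = c + 1"
proof -
  note ww = cube_root_unity_char2(1)[OF char2 w]
  have "c * c = (c * c + c) + c"
    using add_self_char2[OF char2, of c] by (simp add: add.assoc)
  also have "\<dots> = c + w + 1"
    using c ww by (simp add: algebra_simps)
  finally have cc: "c * c = c + w + 1" .
  have "c ^ 4 = (c + w + 1) * (c + w + 1)"
    by (simp add: power4_eq_xxxx cc flip: mult.assoc)
  also have "\<dots> = c + 1"
    by (simp add: algebra_simps cc ww char2)
  finally show ?thesis .
qed

lemma root_x4_x_1_nonzero:
  fixes a :: "'a::field"
  assumes char2: "(2::'a) = 0" and a: "a ^ 4 = a + 1"
  shows "a \<noteq> 0" and "a + 1 \<noteq> 0"
proof -
  show "a \<noteq> 0"
    using a by auto
  show "a + 1 \<noteq> 0"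
  proof
    assume "a + 1 = 0"
    then have "a = 1"
      using add_eq_0_iff_char2[OF char2] by simp
    with a char2 show False
      by simp
  qed
qed

lemma root_x4_x_1_power_2_power:
  fixes a :: "'a::field"
  assumes char2: "(2::'a) = 0" and a: "a ^ 4 = a + 1" and "even h"
  shows "a ^ (2 ^ h) = (if 4 dvd h then a else a + 1)"
proof -
  have "a ^ 16 = (a + 1) ^ 4"
    by (simp add: a flip: a power_mult)
  also have "\<dots> = a"
    using power_2_power_add_char2[OF char2, of a 1 2] a char2 by (simp add: add.assoc)
  finally have a16: "a ^ 16 = a" .
  have "h = 4 * (h div 4) \<or> h = 4 * (h div 4) + 2"
    using \<open>even h\<close> by presburger
  then obtain k where "h = 4 * k \<or> h = 4 * k + 2"
    by blast
  then show ?thesis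
  proof
    assume "h = 4 * k"
    then show ?thesis
      using power_power_eq_self[OF a16, of k] by (simp add: power_mult)
  next
    assume "h = 4 * k + 2"
    then have "(2::nat) ^ h = 16 ^ k * 4"
      by (simp add: power_add power_mult)
    then have "a ^ (2 ^ h) = (a ^ (16 ^ k)) ^ 4"
      by (simp add: power_mult)
    moreover have "\<not> 4 dvd h"
      using \<open>h = 4 * k + 2\<close> by presburger
    ultimately show ?thesis
      using power_power_eq_self[OF a16, of k] a by simp
  qed
qed

section \<open>A field automorphism of order dividing four in characteristic two\<close>

locale frobenius4 =
  fixes F :: "'a::field \<Rightarrow> 'a"
  assumes F_add: "F (a + b) = F a + F b"
    and F_mult: "F (a * b) = F a * F b"
    and F_1: "F 1 = 1"
    and F4: "F (F (F (F x))) = x"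
    and char2: "(2::'a) = 0"
begin

lemma F_0: "F 0 = 0"
  using F_add[of 0 0] by (metis add.right_neutral add_left_cancel)

lemma F_eq_iff: "F a = F b \<longleftrightarrow> a = b"
  by (metis F4)

lemma F_eq_0_iff: "F a = 0 \<longleftrightarrow> a = 0"
  using F_eq_iff[of a 0] by (simp add: F_0)

lemma F_divide: "F (a / b) = F a / F b"
proof (cases "b = 0")
  case False
  then have "F a = F (a / b) * F b"
    by (simp flip: F_mult)
  then show ?thesis
    using False by (simp add: F_eq_0_iff field_simps)
qed (simp add: F_0)

definition norm4 :: "'a \<Rightarrow> 'a" where
  "norm4 t = t * F t * F (F t) * F (F (F t))"

lemma norm4_mult: "norm4 (s * t) = norm4 s * norm4 t"
  by (simp add: norm4_def F_mult ac_simps)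

lemma norm4_divide: "norm4 (s / t) = norm4 s / norm4 t"
  by (simp add: norm4_def F_divide)

lemma norm4_eq_1_if_eigenvector:
  assumes "z \<noteq> 0" and "F z = m * z"
  shows "norm4 m = 1"
proof -
  have "z = F (F (F (F z)))"
    by (simp add: F4)
  also have "\<dots> = norm4 m * z"
    by (simp add: assms(2) F_mult norm4_def ac_simps)
  finally show ?thesis
    using \<open>z \<noteq> 0\<close> by simp
qed

lemma fixed_if_cocycle:
  assumes "w * F w + w + 1 = 0"
  shows "F w = w"
proof -
  have "w \<noteq> 0"
    using assms by auto
  have "w * F w = w + 1"
    using assms add_eq_0_iff_char2[OF char2, of "w * F w" "w + 1"] by (simp add: add.assoc)
  then have Fw: "F w = (w + 1) / w"
    using \<open>w \<noteq> 0\<close> by (simp add: field_simps)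
  then have "w + 1 \<noteq> 0"
    using \<open>w \<noteq> 0\<close> F_eq_0_iff by fastforce
  have "F (F w) = 1 / (w + 1)"
    using \<open>w \<noteq> 0\<close> \<open>w + 1 \<noteq> 0\<close>
    by (simp add: Fw F_divide F_add F_1 field_simps add_self_char2[OF char2])
  then have "F (F (F w)) = w"
    using \<open>w \<noteq> 0\<close> by (simp add: Fw F_divide F_add F_1 field_simps add_self_char2[OF char2])
  then show ?thesis
    using F4[of w] by simp
qed

lemma F_plus_1_quotient:
  fixes l :: 'a
  defines "a \<equiv> F l + l" and "b \<equiv> F (F l) + l"
  assumes "b \<noteq> 0"
  shows "F (a * F (F a) / (b * F b)) = a * F (F a) / (b * F b) + 1"
proof -
  have "F b \<noteq> 0"
    using assms F_eq_0_iff by blast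
  have FFb: "F (F b) = b"
    by (simp add: b_def F_add F4 add.commute)
  have "F a * F (F (F a)) = b * F b + a * F (F a)"
    by (simp add: a_def b_def F_add F4 algebra_simps char2)
  then show ?thesis
    using \<open>b \<noteq> 0\<close> \<open>F b \<noteq> 0\<close> by (simp add: F_divide F_mult FFb field_simps)
qed

definition stabilizes :: "'a \<Rightarrow> 'a \<Rightarrow> 'a \<Rightarrow> bool" where
  "stabilizes l x y \<longleftrightarrow>
     F (l * x) + F (F (l * y)) = l * (F x + F (F y)) \<and>
     F (F (l * x)) + F (l * y) + F (F (l * y)) = l * (F (F x) + F y + F (F y))"

lemma stabilizes_iff:
  "stabilizes l x y \<longleftrightarrow>
     (F l + l) * F x = (F (F l) + l) * F (F y) \<and>
     (F (F l) + l) * F (F x) + (F l + l) * F y + (F (F l) + l) * F (F y) = 0"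
proof -
  have "F (l * x) + F (F (l * y)) + l * (F x + F (F y))
      = (F l + l) * F x + (F (F l) + l) * F (F y)"
    and "F (F (l * x)) + F (l * y) + F (F (l * y)) + l * (F (F x) + F y + F (F y))
      = (F (F l) + l) * F (F x) + (F l + l) * F y + (F (F l) + l) * F (F y)"
    by (simp_all add: F_mult algebra_simps)
  then show ?thesis
    unfolding stabilizes_def
    using add_eq_0_iff_char2[OF char2, of "F (l * x) + F (F (l * y))" "l * (F x + F (F y))"]
      add_eq_0_iff_char2[OF char2, of "F (F (l * x)) + F (l * y) + F (F (l * y))"
        "l * (F (F x) + F y + F (F y))"]
      add_eq_0_iff_char2[OF char2, of "(F l + l) * F x" "(F (F l) + l) * F (F y)"]
    by simp
qed

lemma stabilizes_outside_fixed_field_cocycle: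
  fixes l :: 'a
  defines "a \<equiv> F l + l" and "b \<equiv> F (F l) + l"
  assumes "stabilizes l x y" and "x \<noteq> 0 \<or> y \<noteq> 0" and "F l \<noteq> l"
  shows "F y \<noteq> 0" and "b \<noteq> 0" and "F (F y) = (a * (F x / F y) / b) * F y"
    and "(F x / F y) * F (F x / F y) + F x / F y + 1 = 0"
proof -
  have "a \<noteq> 0"
    using \<open>F l \<noteq> l\<close> add_eq_0_iff_char2[OF char2] by (simp add: a_def)
  have E1: "a * F x = b * F (F y)" and E2: "b * F (F x) + a * F y + b * F (F y) = 0"
    using \<open>stabilizes l x y\<close> by (simp_all add: stabilizes_iff a_def b_def)
  have "y \<noteq> 0"
    using E1 assms(4) \<open>a \<noteq> 0\<close> by (auto simp: F_0 F_eq_0_iff)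
  then have "F y \<noteq> 0" and "F (F y) \<noteq> 0"
    by (simp_all add: F_eq_0_iff)
  then show "F y \<noteq> 0"
    by simp
  show "b \<noteq> 0"
    using E1 E2 \<open>a \<noteq> 0\<close> \<open>F y \<noteq> 0\<close> by auto
  then show "F (F y) = (a * (F x / F y) / b) * F y"
    using E1 \<open>F y \<noteq> 0\<close> by (simp add: field_simps)
  have "a * (F x * F (F x) + F x * F (F y) + F y * F (F y))
      = (a * F x) * (F (F x) + F (F y)) + a * F y * F (F y)"
    by (simp add: algebra_simps)
  also have "\<dots> = F (F y) * (b * F (F x) + a * F y + b * F (F y))"
    by (simp add: E1 algebra_simps)
  finally have "F x * F (F x) + F x * F (F y) + F y * F (F y) = 0"
    using E2 \<open>a \<noteq> 0\<close> by simp
  then show "(F x / F y) * F (F x / F y) + F x / F y + 1 = 0"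
    using \<open>F y \<noteq> 0\<close> \<open>F (F y) \<noteq> 0\<close> by (simp add: F_divide field_simps)
qed

lemma stabilizes_outside_fixed_field:
  assumes "stabilizes l x y" and "x \<noteq> 0 \<or> y \<noteq> 0" and "F l \<noteq> l"
  obtains w c where "w * w + w + 1 = 0" and "F w = w" and "c * c + c = w * w" and "F c = c + 1"
proof -
  define a where "a = F l + l"
  define b where "b = F (F l) + l"
  define w where "w = F x / F y"
  note cocycle = stabilizes_outside_fixed_field_cocycle[OF assms, folded a_def b_def w_def]
  have Fw: "F w = w"
    using cocycle(4) by (rule fixed_if_cocycle)
  with cocycle(4) have w: "w * w + w + 1 = 0"
    by simp
  note w3 = cube_root_unity_char2(2)[OF char2 w]
  define c where "c = a * F (F a) / (b * F b)"
  have Fc: "F c = c + 1"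
    using F_plus_1_quotient[of l] cocycle(2) by (simp add: c_def a_def b_def)
  have FFb: "F (F b) = b"
    by (simp add: b_def F_add F4 add.commute)
  have "norm4 w = w"
    using w3 by (simp add: norm4_def Fw)
  then have "norm4 (a * w / b) = w * (norm4 a / norm4 b)"
    by (simp add: norm4_mult norm4_divide)
  also have "norm4 a / norm4 b = c * F c"
    by (simp add: c_def norm4_def F_divide F_mult FFb ac_simps)
  finally have "w * (c * F c) = 1"
    using norm4_eq_1_if_eigenvector[OF cocycle(1,3)] by simp
  then have "c * F c = w * w"
    using w3 by (metis mult.assoc mult_1 mult.commute)
  then have "c * c + c = w * w"
    using Fc by (simp add: algebra_simps)
  with w Fw Fc that show thesis
    by blast
qed

definition upoint :: "'a \<Rightarrow> 'a \<Rightarrow> 'a ^ 4" where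
  "upoint x y = vector [x, y, F x + F (F y), F (F x) + F y + F (F y)]"

lemma upoint_eq_iff: "upoint x y = upoint x' y' \<longleftrightarrow> x = x' \<and> y = y'"
  by (auto simp: upoint_def vec4_eq_iff)

lemma upoint_0: "upoint 0 0 = 0"
  by (simp add: upoint_def vec4_eq_iff F_0)

lemma upoint_eq_0_iff: "upoint x y = 0 \<longleftrightarrow> x = 0 \<and> y = 0"
  using upoint_eq_iff[of x y 0 0] by (simp add: upoint_0)

lemma upoint_add: "upoint x y + upoint x' y' = upoint (x + x') (y + y')"
  by (simp add: upoint_def vec4_eq_iff F_add algebra_simps)

lemma smultv_upoint_fixed: "F c = c \<Longrightarrow> smultv c (upoint x y) = upoint (c * x) (c * y)"
  by (simp add: upoint_def vec4_eq_iff F_mult algebra_simps)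

lemma smultv_upoint_in_upoints_iff:
  "smultv l (upoint x y) \<in> {upoint x y | x y. True} \<longleftrightarrow> stabilizes l x y"
proof
  assume "smultv l (upoint x y) \<in> {upoint x y | x y. True}"
  then obtain x' y' where "smultv l (upoint x y) = upoint x' y'"
    by blast
  then show "stabilizes l x y"
    by (auto simp: upoint_def vec4_eq_iff stabilizes_def)
next
  assume "stabilizes l x y"
  then have "smultv l (upoint x y) = upoint (l * x) (l * y)"
    by (simp add: upoint_def vec4_eq_iff stabilizes_def)
  then show "smultv l (upoint x y) \<in> {upoint x y | x y. True}"
    by blast
qed

lemma Fq_subspace_upoints:
  assumes "\<And>c. c \<in> Fq q \<Longrightarrow> F c = c"
  shows "Fq_subspace q {upoint x y | x y. True}"
  unfolding Fq_subspace_def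
proof (intro conjI ballI)
  show "0 \<in> {upoint x y | x y. True}"
    using upoint_0[symmetric] by blast
  show "u + v \<in> {upoint x y | x y. True}"
    if "u \<in> {upoint x y | x y. True}" "v \<in> {upoint x y | x y. True}" for u v
    using that upoint_add by blast
  show "smultv c u \<in> {upoint x y | x y. True}"
    if "c \<in> Fq q" "u \<in> {upoint x y | x y. True}" for c u
    using that assms smultv_upoint_fixed by blast
qed

lemma card_upoints: "card {upoint x y | x y. True} = CARD('a \<times> 'a)"
proof -
  have "{upoint x y | x y. True} = (\<lambda>(x, y). upoint x y) ` UNIV"
    by auto
  moreover have "inj (\<lambda>(x, y). upoint x y)"
    by (auto intro!: injI simp: upoint_eq_iff)
  ultimately show ?thesis
    by (simp add: card_image)
qed

lemma stabilizes_witness: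
  assumes a: "a ^ 4 = a + 1" and Fa: "F a = a + 1" and Fl: "F l + l = a"
  shows "stabilizes l (a * a / (a + 1)) (a * a + 1)"
proof -
  define x where "x = a * a / (a + 1)"
  define y where "y = a * a + 1"
  have "a \<noteq> 0" and "a + 1 \<noteq> 0"
    using root_x4_x_1_nonzero[OF char2 a] by simp_all
  have FFa: "F (F a) = a"
    by (simp add: Fa F_add F_1 char2)
  have FFl: "F (F l) + l = 1"
    using Fl Fa by (simp add: F_add char2 flip: Fl)
  have Fx: "F x = (a + 1) * (a + 1) / a" and FFx: "F (F x) = x"
    by (simp_all add: x_def F_divide F_mult F_add F_1 Fa FFa char2)
  have Fy: "F y = a * a" and FFy: "F (F y) = y"
    by (simp_all add: y_def F_mult F_add F_1 Fa FFa char2 algebra_simps)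
  have "a * F x = (a + 1) * (a + 1)"
    using \<open>a \<noteq> 0\<close> by (simp add: Fx)
  then have "a * F x = F (F y)"
    unfolding FFy by (simp add: y_def algebra_simps char2)
  moreover have "F (F x) + a * F y + F (F y) = 0"
  proof -
    have "(a + 1) * x = a * a"
      using \<open>a + 1 \<noteq> 0\<close> by (simp add: x_def)
    then have "(a + 1) * (x + a * (a * a) + y) = a * a + (a + 1) * (a * (a * a) + y)"
      by (simp add: algebra_simps)
    also have "\<dots> = a ^ 4 + a + 1"
      by (simp add: y_def algebra_simps char2 power4_eq_xxxx)
    also have "x + a * (a * a) + y = F (F x) + a * F y + F (F y)"
      using FFx Fy FFy by simp
    finally show ?thesis
      using \<open>a + 1 \<noteq> 0\<close> a by (simp add: char2)
  qed
  ultimately have "stabilizes l x y"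
    by (simp add: stabilizes_iff Fl FFl)
  then show ?thesis
    by (simp add: x_def y_def)
qed

end

section \<open>The Frobenius of a field of order \<open>q ^ 4\<close>\<close>

lemma frobenius4_power:
  assumes card: "CARD('a::{field,finite}) = q ^ 4" and q: "q = 2 ^ h"
  shows "frobenius4 (\<lambda>x::'a. x ^ q)"
proof
  show char2: "(2::'a) = 0"
    using card q two_eq_0_if_CARD_power_2[of "h * 4"] by (simp add: power_mult)
  show "(a + b) ^ q = a ^ q + b ^ q" for a b :: 'a
    using power_2_power_add_char2[OF char2] q by simp
  show "(((x ^ q) ^ q) ^ q) ^ q = x" for x :: 'a
    using power_CARD_eq_self[of x] card by (simp add: power_mult[symmetric] power4_eq_xxxx mult.assoc)
qed (simp_all add: power_mult_distrib)

lemma stabilizer_in_Fq: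
  assumes card: "CARD('a::{field,finite}) = q ^ 4" and q: "q = 2 ^ h" and "h mod 4 \<noteq> 2"
    and stab: "frobenius4.stabilizes (\<lambda>x::'a. x ^ q) l x y" and "x \<noteq> 0 \<or> y \<noteq> 0"
  shows "l ^ q = l"
proof (rule ccontr)
  assume "l ^ q \<noteq> l"
  interpret frobenius4 "\<lambda>x::'a. x ^ q"
    using card q by (rule frobenius4_power)
  obtain w c :: 'a where w: "w * w + w + 1 = 0" and "w ^ q = w"
    and c: "c * c + c = w * w" and "c ^ q = c + 1"
    using stabilizes_outside_fixed_field[OF stab \<open>x \<noteq> 0 \<or> y \<noteq> 0\<close> \<open>l ^ q \<noteq> l\<close>] .
  show False
  proof (cases "odd h")
    case True
    then show False
      using power_2_power_odd_cube_root[OF char2 w] \<open>w ^ q = w\<close> q by simp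
  next
    case False
    then have "4 dvd h" and "even h"
      using \<open>h mod 4 \<noteq> 2\<close> by presburger+
    then show False
      using root_x4_x_1_power_2_power[OF char2 power_4_eq_if_cube_root_relation[OF char2 w c]]
        \<open>c ^ q = c + 1\<close> q by simp
  qed
qed

lemma exists_root_x4_x_1:
  assumes "CARD('a::{field,finite}) = 16 ^ k"
  obtains a :: "'a::{field,finite}" where "a ^ 4 = a + 1"
proof -
  have card: "CARD('a) = 4 ^ (2 * k)"
    using assms by (simp add: power_mult)
  then have char2: "(2::'a) = 0"
    using two_eq_0_if_CARD_power_2[of "4 * k"] by (simp add: power_mult)
  have "(\<Sum>i<2 * k. (1::'a) ^ (4 ^ i)) = of_nat (2 * k)"
    by simp
  also have "\<dots> = 0"
    using char2 by simp
  finally have "(1::'a) \<in> range (\<lambda>x. x ^ 4 + x)"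
    using artin_schreier(2)[OF card, of 2] by simp
  then obtain a :: 'a where "1 = a ^ 4 + a"
    by blast
  then have "a ^ 4 = a + 1"
    using add_eq_iff_char2[OF char2, of "a ^ 4" a 1] by (simp add: add.commute)
  then show thesis
    by (rule that)
qed

lemma exists_stabilizer_outside_Fq:
  assumes card: "CARD('a::{field,finite}) = q ^ 4" and q: "q = 2 ^ h" and "h \<ge> 1"
    and "h mod 4 = 2"
  obtains l x y :: "'a::{field,finite}" where "l ^ q \<noteq> l" and "x \<noteq> 0 \<or> y \<noteq> 0"
    and "frobenius4.stabilizes (\<lambda>x::'a. x ^ q) l x y"
proof -
  interpret frobenius4 "\<lambda>x::'a. x ^ q"
    using card q by (rule frobenius4_power)
  have "((2::nat) ^ h) ^ 4 = (2 ^ 4) ^ h"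
    by (simp only: power_mult[symmetric] mult.commute)
  then have "CARD('a) = 16 ^ h"
    using card q by simp
  then obtain a :: 'a where a: "a ^ 4 = a + 1"
    by (rule exists_root_x4_x_1)
  have "even h" and "\<not> 4 dvd h"
    using \<open>h mod 4 = 2\<close> by presburger+
  then have Fa: "a ^ q = a + 1"
    using root_x4_x_1_power_2_power[OF char2 a] q by simp
  have "(\<Sum>i<4. a ^ (q ^ i)) = a + a ^ q + (a ^ q) ^ q + ((a ^ q) ^ q) ^ q"
    by (simp add: eval_nat_numeral power_mult algebra_simps)
  also have "\<dots> = 0"
    by (simp add: Fa F_add char2 algebra_simps)
  finally have "a \<in> range (\<lambda>x. x ^ q + x)"
    using artin_schreier(2)[OF card q \<open>h \<ge> 1\<close>] by simp
  then obtain l where Fl: "l ^ q + l = a"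
    by auto
  have "a * a + 1 = (a + 1) * (a + 1)"
    by (simp add: algebra_simps char2)
  then have "a * a + 1 \<noteq> 0"
    using root_x4_x_1_nonzero(2)[OF char2 a] by simp
  moreover have "l ^ q \<noteq> l"
    using Fl root_x4_x_1_nonzero(1)[OF char2 a] add_self_char2[OF char2, of l] by auto
  moreover have "stabilizes l (a * a / (a + 1)) (a * a + 1)"
    using a Fa Fl by (rule stabilizes_witness)
  ultimately show thesis
    using that by blast
qed

theorem theorem4p1:
  fixes h :: nat and q :: nat and U :: "('a::{field,finite} ^ 4) set"
  assumes "h \<ge> 1" and "q = 2 ^ h" and "CARD('a) = q ^ 4"
    and "U = {vector [x, y, x ^ q + y ^ (q^2), x ^ (q^2) + y ^ q + y ^ (q^2)] | x y. True}"
  shows "maximum_scattered q 4 U \<longleftrightarrow> h mod 4 \<noteq> 2"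
proof -
  note h = assms(1) and q = assms(2) and card = assms(3)
  interpret frobenius4 "\<lambda>x::'a. x ^ q"
    using card q by (rule frobenius4_power)
  have U: "U = {upoint x y | x y. True}"
    using assms(4) by (simp add: upoint_def power2_eq_square power_mult)
  have K: "is_subfield (Fq q :: 'a set)"
    using F_add q by (intro is_subfield_Fq) simp_all
  have sub: "Fq_subspace q U"
    unfolding U by (rule Fq_subspace_upoints) (simp add: Fq_def)
  have "card U = CARD('a \<times> 'a)"
    unfolding U by (rule card_upoints)
  also have "\<dots> = q ^ 8"
    using card by (simp add: card_cartesian_product flip: UNIV_Times_UNIV power_add)
  finally have dim: "Fq_dim q U = 8"
    using artin_schreier(1)[OF card q h] by (intro Fq_dim_eq[OF K _ sub]) (simp_all add: Fq_def)
  have "scattered q U \<longleftrightarrow> (\<forall>x y l. upoint x y \<noteq> 0 \<longrightarrow> smultv l (upoint x y) \<in> U \<longrightarrow> l \<in> Fq q)"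
    using scattered_iff[OF K sub] unfolding U by blast
  also have "\<dots> \<longleftrightarrow> (\<forall>l x y. (x \<noteq> 0 \<or> y \<noteq> 0) \<longrightarrow> stabilizes l x y \<longrightarrow> l ^ q = l)"
    unfolding U smultv_upoint_in_upoints_iff upoint_eq_0_iff Fq_def by blast
  finally show ?thesis
    using dim stabilizer_in_Fq[OF card q] exists_stabilizer_outside_Fq[OF card q h]
    by (auto simp: maximum_scattered_def)
qed

end
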